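(* Let $n$ be a positive integer. Then $\mathsf{NAADT}(\mathsf{OMB}_n) = n$. Moreover, $\mathrm{spar}(\mathsf{OMB}_n) = n$ if $n$ is even, and $\mathrm{spar}(\mathsf{OMB}_n) = n+1$ if $n$ is odd.
   Context: $\mathsf{OMB}_n:\{0,1\}^n\to\{0,1\}$ is defined by $\mathsf{OMB}_n(x)=1$ if $\max\{i\in[n]:x_i=0\}$ is odd and $0$ otherwise, with $\mathsf{OMB}_n(1^n)=0$. $\mathsf{AND}_S(x)=\prod_{i\in S}x_i$. $\mathsf{NAADT}(f)$ is the minimum $k$ for which there exist $S_1,\dots,S_k\subseteq[n]$ such that $f(x)$ is determined by $\mathsf{AND}_{S_1}(x),\dots,\mathsf{AND}_{S_k}(x)$ for all $x$. $\mathrm{spar}(f)$ is the number of nonzero coefficients $\widetilde f(S)$ in the unique expansion $f=\sum_{S\subseteq[n]}\widetilde f(S)\mathsf{AND}_S$ with real coefficients. *)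

theory Defs
  imports Complex_Main
begin

text \<open>Inputs x in {0,1}^n are modelled as x :: nat => bool, true meaning bit 1,
  with coordinates indexed by [n] = {1..n} and all other coordinates False.\<close>

definition cube :: "nat \<Rightarrow> (nat \<Rightarrow> bool) set" where
  "cube n = {x. \<forall>i. i \<notin> {1..n} \<longrightarrow> \<not> x i}"

definition OMB :: "nat \<Rightarrow> (nat \<Rightarrow> bool) \<Rightarrow> real" where
  "OMB n x = (if (\<exists>i\<in>{1..n}. \<not> x i) \<and> odd (Max {i\<in>{1..n}. \<not> x i}) then 1 else 0)"

definition AND :: "nat set \<Rightarrow> (nat \<Rightarrow> bool) \<Rightarrow> real" where
  "AND S x = (\<Prod>i\<in>S. if x i then 1 else 0)"

definition determined_by :: "nat \<Rightarrow> ((nat \<Rightarrow> bool) \<Rightarrow> real) \<Rightarrow> nat set list \<Rightarrow> bool" where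
  "determined_by n f Ss \<longleftrightarrow> set Ss \<subseteq> Pow {1..n} \<and>
     (\<forall>x\<in>cube n. \<forall>y\<in>cube n. (\<forall>S\<in>set Ss. AND S x = AND S y) \<longrightarrow> f x = f y)"

definition NAADT :: "nat \<Rightarrow> ((nat \<Rightarrow> bool) \<Rightarrow> real) \<Rightarrow> nat" where
  "NAADT n f = (LEAST k. \<exists>Ss. length Ss = k \<and> determined_by n f Ss)"

definition and_coeffs :: "nat \<Rightarrow> ((nat \<Rightarrow> bool) \<Rightarrow> real) \<Rightarrow> nat set \<Rightarrow> real" where
  "and_coeffs n f = (THE c. (\<forall>S. S \<notin> Pow {1..n} \<longrightarrow> c S = 0) \<and>
      (\<forall>x\<in>cube n. f x = (\<Sum>S\<in>Pow {1..n}. c S * AND S x)))"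

definition spar :: "nat \<Rightarrow> ((nat \<Rightarrow> bool) \<Rightarrow> real) \<Rightarrow> nat" where
  "spar n f = card {S. S \<subseteq> {1..n} \<and> and_coeffs n f S \<noteq> 0}"

end

theory Submission
  imports Defs
begin

(* Let z(x) be the position of the last zero of x, with z(1^n) = 0. Then OMB_n x = [z(x) odd]
   and AND_{k+1..n} x = [z(x) <= k], so the n suffix monomials with k < n determine z and hence
   OMB_n. Conversely, along the chain 0^k 1^(n-k) the value of OMB_n changes at every step, and a
   monomial separating 0^k 1^(n-k) from 0^(k+1) 1^(n-k-1) must have minimum k+1; so n distinct
   monomials are needed. Every function h(z(x)) telescopes into
   sum_{k<n} (h k - h (k+1)) AND_{k+1..n} x + h n, and the AND-expansion is unique (evaluate a
   vanishing expansion at the indicator of a minimal support set). For h = [odd] all n differences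
   are nonzero and h n = [n odd]. *)

definition last_zero :: "nat \<Rightarrow> (nat \<Rightarrow> bool) \<Rightarrow> nat" where
  "last_zero n x = (if \<exists>i\<in>{1..n}. \<not> x i then Max {i\<in>{1..n}. \<not> x i} else 0)"

lemma OMB_eq_odd_last_zero: "OMB n x = (if odd (last_zero n x) then 1 else 0)"
  unfolding OMB_def last_zero_def by auto

lemma last_zero_le_iff: "last_zero n x \<le> k \<longleftrightarrow> (\<forall>i\<in>{Suc k..n}. x i)"
proof (cases "\<exists>i\<in>{1..n}. \<not> x i")
  case True
  then have "last_zero n x \<le> k \<longleftrightarrow> (\<forall>i\<in>{i\<in>{1..n}. \<not> x i}. i \<le> k)"
    unfolding last_zero_def using True by (simp only: if_True, subst Max_le_iff) auto
  then show ?thesis by (auto simp: Suc_le_eq) (meson le0 le_less_trans leD)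
qed (auto simp: last_zero_def)

lemma last_zero_le: "last_zero n x \<le> n"
  by (simp add: last_zero_le_iff)

lemma last_zero_suffix_indicator:
  assumes "k \<le> n"
  shows "last_zero n (\<lambda>i. i \<in> {Suc k..n}) = k"
proof -
  have "last_zero n (\<lambda>i. i \<in> {Suc k..n}) \<le> j \<longleftrightarrow> k \<le> j" for j
    using assms by (auto simp: last_zero_le_iff not_less_eq_eq[symmetric])
  then show ?thesis by (metis le_antisym le_refl)
qed

lemma AND_eq_all: "finite S \<Longrightarrow> AND S x = (if \<forall>i\<in>S. x i then 1 else 0)"
  unfolding AND_def by (auto simp: prod_zero_iff)

lemma AND_indicator: "finite S \<Longrightarrow> AND S (\<lambda>i. i \<in> A) = (if S \<subseteq> A then 1 else 0)"
  by (auto simp: AND_eq_all)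

lemma AND_suffix: "AND {Suc k..n} x = (if last_zero n x \<le> k then 1 else 0)"
  by (simp add: AND_eq_all last_zero_le_iff)

lemma indicator_in_cube: "A \<subseteq> {1..n} \<Longrightarrow> (\<lambda>i. i \<in> A) \<in> cube n"
  unfolding cube_def by auto

lemma AND_expansion_unique:
  fixes c :: "nat set \<Rightarrow> real"
  assumes support: "\<forall>S. S \<notin> Pow {1..n} \<longrightarrow> c S = 0"
    and vanishes: "\<forall>x\<in>cube n. (\<Sum>S\<in>Pow {1..n}. c S * AND S x) = 0"
  shows "c = (\<lambda>_. 0)"
proof (rule ccontr)
  assume "c \<noteq> (\<lambda>_. 0)"
  then obtain S1 where "c S1 \<noteq> 0"
    by auto
  then obtain S0 where S0: "c S0 \<noteq> 0" and minimal: "\<And>S. c S \<noteq> 0 \<Longrightarrow> card S0 \<le> card S"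
    using ex_has_least_nat[of "\<lambda>S. c S \<noteq> 0" S1 card] by blast
  have S0_sub: "S0 \<subseteq> {1..n}"
    using support S0 by auto
  then have "finite S0"
    by (rule finite_subset) simp
  then have below_S0: "c S = 0" if "S \<subset> S0" for S
    using minimal psubset_card_mono[OF _ that] by force
  have "AND S (\<lambda>i. i \<in> S0) = (if S \<subseteq> S0 then 1 else 0)" if "S \<subseteq> {1..n}" for S
    using finite_subset[OF that finite_atLeastAtMost] by (rule AND_indicator)
  then have "(\<Sum>S\<in>Pow {1..n}. c S * AND S (\<lambda>i. i \<in> S0)) = (\<Sum>S\<in>Pow S0. c S)"
    using S0_sub by (intro sum.mono_neutral_cong_right) auto
  also have "\<dots> = (\<Sum>S\<in>{S0}. c S)"
    using \<open>finite S0\<close> below_S0 by (intro sum.mono_neutral_right) auto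
  finally show False
    using vanishes indicator_in_cube[OF S0_sub] S0 by auto
qed

lemma and_coeffs_eqI:
  assumes support: "\<forall>S. S \<notin> Pow {1..n} \<longrightarrow> c S = 0"
    and expansion: "\<forall>x\<in>cube n. f x = (\<Sum>S\<in>Pow {1..n}. c S * AND S x)"
  shows "and_coeffs n f = c"
  unfolding and_coeffs_def
proof (rule the_equality)
  fix d assume d: "(\<forall>S. S \<notin> Pow {1..n} \<longrightarrow> d S = 0) \<and>
    (\<forall>x\<in>cube n. f x = (\<Sum>S\<in>Pow {1..n}. d S * AND S x))"
  have "(\<lambda>S. d S - c S) = (\<lambda>_. 0)"
  proof (rule AND_expansion_unique)
    show "\<forall>S. S \<notin> Pow {1..n} \<longrightarrow> d S - c S = 0"
      using d support by simp
    show "\<forall>x\<in>cube n. (\<Sum>S\<in>Pow {1..n}. (d S - c S) * AND S x) = 0"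
    proof
      fix x assume "x \<in> cube n"
      have "(\<Sum>S\<in>Pow {1..n}. d S * AND S x) = (\<Sum>S\<in>Pow {1..n}. c S * AND S x)"
        using d expansion \<open>x \<in> cube n\<close> by simp
      then show "(\<Sum>S\<in>Pow {1..n}. (d S - c S) * AND S x) = 0"
        by (simp add: left_diff_distrib sum_subtractf)
    qed
  qed
  then show "d = c"
    by (simp add: fun_eq_iff)
qed (use assms in auto)

definition telescoping_coeff :: "nat \<Rightarrow> (nat \<Rightarrow> real) \<Rightarrow> nat \<Rightarrow> real" where
  "telescoping_coeff n h k = (if k < n then h k - h (Suc k) else h n)"

lemma sum_telescoping_coeff:
  assumes "m \<le> n"
  shows "(\<Sum>k=m..n. telescoping_coeff n h k) = h m"
proof -
  have "(\<Sum>k=m..n. telescoping_coeff n h k) = (\<Sum>k=m..<n. h k - h (Suc k)) + h n"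
    using assms by (simp add: sum.last_plus telescoping_coeff_def)
  also have "(\<Sum>k=m..<n. h k - h (Suc k)) = - (\<Sum>k=m..<n. h (Suc k) - h k)"
    by (simp add: sum_negf[symmetric])
  finally show ?thesis
    using assms by (simp add: sum_Suc_diff')
qed

(* The suffix {Suc k..n} has n - k elements, so n - card S recovers k. *)
definition suffix_coeffs :: "nat \<Rightarrow> (nat \<Rightarrow> real) \<Rightarrow> nat set \<Rightarrow> real" where
  "suffix_coeffs n h S =
     (if S \<in> (\<lambda>k. {Suc k..n}) ` {..n} then telescoping_coeff n h (n - card S) else 0)"

lemma suffix_coeffs_suffix: "k \<le> n \<Longrightarrow> suffix_coeffs n h {Suc k..n} = telescoping_coeff n h k"
  unfolding suffix_coeffs_def by auto

lemma inj_on_suffix: "inj_on (\<lambda>k. {Suc k..n}) {..n}"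
  by (rule inj_onI) (metis atMost_iff card_atLeastAtMost diff_diff_cancel diff_Suc_Suc)

lemma suffix_expansion:
  "(\<Sum>S\<in>Pow {1..n}. suffix_coeffs n h S * AND S x) = h (last_zero n x)"
proof -
  have "(\<Sum>S\<in>Pow {1..n}. suffix_coeffs n h S * AND S x)
      = (\<Sum>S\<in>(\<lambda>k. {Suc k..n}) ` {..n}. suffix_coeffs n h S * AND S x)"
    by (rule sum.mono_neutral_right) (auto simp: suffix_coeffs_def)
  also have "\<dots> = (\<Sum>k\<in>{..n}. if last_zero n x \<le> k then telescoping_coeff n h k else 0)"
    by (auto simp: sum.reindex[OF inj_on_suffix] suffix_coeffs_suffix AND_suffix intro!: sum.cong)
  also have "\<dots> = (\<Sum>k=last_zero n x..n. telescoping_coeff n h k)"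
    by (rule sum.mono_neutral_cong_right) auto
  also have "\<dots> = h (last_zero n x)"
    by (rule sum_telescoping_coeff[OF last_zero_le])
  finally show ?thesis .
qed

lemma and_coeffs_function_of_last_zero:
  assumes "\<forall>x\<in>cube n. f x = h (last_zero n x)"
  shows "and_coeffs n f = suffix_coeffs n h"
proof (rule and_coeffs_eqI)
  show "\<forall>S. S \<notin> Pow {1..n} \<longrightarrow> suffix_coeffs n h S = 0"
    by (auto simp: suffix_coeffs_def)
  show "\<forall>x\<in>cube n. f x = (\<Sum>S\<in>Pow {1..n}. suffix_coeffs n h S * AND S x)"
    using assms by (simp only: suffix_expansion)
qed

lemma spar_function_of_last_zero:
  assumes "\<forall>x\<in>cube n. f x = h (last_zero n x)"
  shows "spar n f = card {k. k \<le> n \<and> telescoping_coeff n h k \<noteq> 0}"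
proof -
  have "{S. S \<subseteq> {1..n} \<and> suffix_coeffs n h S \<noteq> 0}
      = (\<lambda>k. {Suc k..n}) ` {k. k \<le> n \<and> telescoping_coeff n h k \<noteq> 0}"
    by (auto simp: suffix_coeffs_def)
  moreover have "inj_on (\<lambda>k. {Suc k..n}) {k. k \<le> n \<and> telescoping_coeff n h k \<noteq> 0}"
    by (rule inj_on_subset[OF inj_on_suffix]) auto
  ultimately show ?thesis
    unfolding spar_def and_coeffs_function_of_last_zero[OF assms] by (simp add: card_image)
qed

lemma determined_by_suffixes:
  assumes "\<forall>x\<in>cube n. f x = h (last_zero n x)"
  shows "determined_by n f (map (\<lambda>k. {Suc k..n}) [0..<n])"
  unfolding determined_by_def
proof (intro conjI ballI impI)
  show "set (map (\<lambda>k. {Suc k..n}) [0..<n]) \<subseteq> Pow {1..n}"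
    by auto
  fix x y
  assume x: "x \<in> cube n" and y: "y \<in> cube n"
    and agree: "\<forall>S\<in>set (map (\<lambda>k. {Suc k..n}) [0..<n]). AND S x = AND S y"
  have "last_zero n x \<le> k \<longleftrightarrow> last_zero n y \<le> k" for k
  proof (cases "k < n")
    case True
    then have "AND {Suc k..n} x = AND {Suc k..n} y"
      using agree by simp
    then show ?thesis
      by (simp add: AND_suffix split: if_splits)
  next
    case False
    then show ?thesis
      using last_zero_le[of n x] last_zero_le[of n y] by simp
  qed
  then have "last_zero n x = last_zero n y"
    by (metis le_antisym le_refl)
  then show "f x = f y"
    using assms x y by simp
qed

lemma length_ge_if_flips_along_suffixes:
  assumes det: "determined_by n f Ss"
    and flips: "\<And>k. k < n \<Longrightarrow> f (\<lambda>i. i \<in> {Suc k..n}) \<noteq> f (\<lambda>i. i \<in> {Suc (Suc k)..n})"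
  shows "n \<le> length Ss"
proof -
  have "Suc k \<in> Min ` set Ss" if k: "k < n" for k
  proof -
    have "(\<lambda>i. i \<in> {Suc k..n}) \<in> cube n" "(\<lambda>i. i \<in> {Suc (Suc k)..n}) \<in> cube n"
      by (rule indicator_in_cube, force)+
    then obtain S where S: "S \<in> set Ss"
      and separates: "AND S (\<lambda>i. i \<in> {Suc k..n}) \<noteq> AND S (\<lambda>i. i \<in> {Suc (Suc k)..n})"
      using det flips[OF k] unfolding determined_by_def by blast
    have "S \<subseteq> {1..n}"
      using S det unfolding determined_by_def by auto
    then have "finite S"
      by (rule finite_subset) simp
    then have in_suffix: "S \<subseteq> {Suc k..n}" and "\<not> S \<subseteq> {Suc (Suc k)..n}"
      using separates unfolding AND_indicator[OF \<open>finite S\<close>] by (auto split: if_splits)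
    then obtain i where "i \<in> S" and "i \<notin> {Suc (Suc k)..n}"
      by blast
    then have "Suc k \<in> S"
      using in_suffix by (metis atLeastAtMost_iff le_antisym not_less_eq_eq subsetD)
    then have "Min S = Suc k"
      using \<open>finite S\<close> in_suffix by (intro Min_eqI) auto
    then show ?thesis
      using S by force
  qed
  then have "Suc ` {..<n} \<subseteq> Min ` set Ss"
    by auto
  then have "card (Suc ` {..<n}) \<le> card (Min ` set Ss)"
    by (intro card_mono) auto
  also have "\<dots> \<le> length Ss"
    using card_image_le card_length le_trans by blast
  finally show ?thesis
    by (simp add: card_image)
qed

lemma NAADT_eqI:
  assumes "determined_by n f Ss"
    and "\<And>Ts. determined_by n f Ts \<Longrightarrow> length Ss \<le> length Ts"
  shows "NAADT n f = length Ss"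
  unfolding NAADT_def by (rule Least_equality) (use assms in auto)

lemma NAADT_OMB: "NAADT n (OMB n) = n"
proof -
  have OMB_suffix: "OMB n (\<lambda>i. i \<in> {Suc k..n}) = (if odd k then 1 else 0)" if "k \<le> n" for k
    by (simp only: OMB_eq_odd_last_zero last_zero_suffix_indicator[OF that])
  have "NAADT n (OMB n) = length (map (\<lambda>k. {Suc k..n}) [0..<n])"
  proof (rule NAADT_eqI)
    show "determined_by n (OMB n) (map (\<lambda>k. {Suc k..n}) [0..<n])"
      by (rule determined_by_suffixes[where h = "\<lambda>k. if odd k then 1 else 0"])
        (simp add: OMB_eq_odd_last_zero)
    show "length (map (\<lambda>k. {Suc k..n}) [0..<n]) \<le> length Ts" if "determined_by n (OMB n) Ts" for Ts
      using length_ge_if_flips_along_suffixes[OF that] OMB_suffix by simp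
  qed
  then show ?thesis
    by simp
qed

lemma spar_OMB: "spar n (OMB n) = (if odd n then n + 1 else n)"
proof -
  let ?h = "\<lambda>k. if odd k then 1 else 0 :: real"
  have "\<forall>x\<in>cube n. OMB n x = ?h (last_zero n x)"
    by (simp add: OMB_eq_odd_last_zero)
  then have "spar n (OMB n) = card {k. k \<le> n \<and> telescoping_coeff n ?h k \<noteq> 0}"
    by (rule spar_function_of_last_zero)
  also have "{k. k \<le> n \<and> telescoping_coeff n ?h k \<noteq> 0} = (if odd n then {..n} else {..<n})"
    by (auto simp: telescoping_coeff_def)
  finally show ?thesis
    by simp
qed

theorem claim4p6:
  fixes n :: nat
  assumes "n \<ge> 1"
  shows "NAADT n (OMB n) = n \<and>
         (even n \<longrightarrow> spar n (OMB n) = n) \<and>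
         (odd n \<longrightarrow> spar n (OMB n) = n + 1)"
  by (simp add: NAADT_OMB spar_OMB)

end
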